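(* Let $n\in\mathbb{N}$ and let $\mathcal{K}^n$ be the $n$-dimensional Khalimsky space. Then $\mathcal{K}^n$ is a connected Alexandroff space whose set of closed points is $\{(2\lambda_1,\ldots,2\lambda_n):\lambda_1,\ldots,\lambda_n\in\mathbb{Z}\}$. Consequently a map $f:\mathcal{K}^n\to\mathcal{K}^n$ has closed graph if and only if $f$ is constant with value $(2\lambda_1,\ldots,2\lambda_n)$ for some integers $\lambda_1,\ldots,\lambda_n$; in particular there are countably infinitely many self-maps of $\mathcal{K}^n$ with closed graph. Moreover, the constant map $g:\mathcal{K}^n\to\mathcal{K}^n$ with value $(1,\ldots,1)$ is continuous but does not have closed graph.
   Context: The Khalimsky line $\mathcal{K}$ is $\mathbb{Z}$ with the topology generated by the base consisting of all sets $\{2m+1\}$ and $\{2m-1,2m,2m+1\}$ for $m\in\mathbb{Z}$; $\mathcal{K}^n$ is the $n$-fold product with the product topology. A map $f:X\to Y$ has closed graph if $G_f=\{(x,f(x)):x\in X\}$ is closed in $X\times Y$. A point $y$ is closed if $\{y\}$ is closed. A topological space is an Alexandroff space if the intersection of every nonempty family of open sets is open. *)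

theory Defs
  imports "HOL-Analysis.Analysis"
begin

definition khalimsky_line :: "int topology" where
  "khalimsky_line = topology_generated_by
     ((\<lambda>m. {2*m+1}) ` UNIV \<union> (\<lambda>m. {2*m-1, 2*m, 2*m+1}) ` UNIV)"

text \<open>The n-dimensional Khalimsky space: n-fold product of the Khalimsky line,
  points are extensional functions on the index set {0..<n}.\<close>
definition khalimsky_space :: "nat \<Rightarrow> (nat \<Rightarrow> int) topology" where
  "khalimsky_space n = product_topology (\<lambda>i. khalimsky_line) {..<n}"

definition alexandroff_space :: "'a topology \<Rightarrow> bool" where
  "alexandroff_space X \<longleftrightarrow>
     (\<forall>F. F \<noteq> {} \<and> (\<forall>U\<in>F. openin X U) \<longrightarrow> openin X (\<Inter>F))"

definition closed_graph :: "'a topology \<Rightarrow> 'b topology \<Rightarrow> ('a \<Rightarrow> 'b) \<Rightarrow> bool" where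
  "closed_graph X Y f \<longleftrightarrow>
     closedin (prod_topology X Y) {(x, f x) | x. x \<in> topspace X}"

end

theory Submission
  imports Defs
begin

text \<open>In the Khalimsky line the smallest open neighbourhood of an odd point is the point
  itself and that of an even point \<open>2m\<close> is \<open>{2m-1, 2m, 2m+1}\<close>; hence the line is an
  Alexandroff space whose closed points are the even integers, and the finite product
  \<open>\<K>\<^sup>n\<close> inherits the Alexandroff property, connectedness and, coordinatewise, its closed points.
  A map with closed graph takes only closed points as values and agrees on \<open>x\<close> and \<open>x'\<close>
  whenever \<open>x\<close> lies in the closure of \<open>{x'}\<close>. In an Alexandroff space the latter makes
  every fibre open, so on a connected space the map is constant. Conversely, the graph of the
  constant map with a closed value \<open>c\<close> is the closed set \<open>X \<times> {c}\<close>.\<close>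

lemma closed_graph_funcset:
  assumes "closed_graph X Y f"
  shows "f \<in> topspace X \<rightarrow> topspace Y"
proof -
  have "{(x, f x) | x. x \<in> topspace X} \<subseteq> topspace X \<times> topspace Y"
    using closedin_subset[OF assms[unfolded closed_graph_def]] by simp
  then show ?thesis by blast
qed

lemma closed_graph_separation:
  assumes "closed_graph X Y f" "x \<in> topspace X" "y \<in> topspace Y" "y \<noteq> f x"
  obtains U V where "openin X U" "openin Y V" "x \<in> U" "y \<in> V" "\<forall>x'\<in>U. f x' \<notin> V"
proof -
  let ?G = "{(x, f x) | x. x \<in> topspace X}"
  have "openin (prod_topology X Y) (topspace X \<times> topspace Y - ?G)"
    using assms(1) by (simp add: closed_graph_def closedin_def)
  moreover have "(x, y) \<in> topspace X \<times> topspace Y - ?G"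
    using assms by auto
  ultimately obtain U V where UV: "openin X U" "openin Y V" "x \<in> U" "y \<in> V"
      "U \<times> V \<subseteq> topspace X \<times> topspace Y - ?G"
    unfolding openin_prod_topology_alt by meson
  then have "\<forall>x'\<in>U. f x' \<notin> V"
    using openin_subset[OF UV(1)] by blast
  with UV show thesis by (intro that)
qed

lemma closed_graph_imp_closedin_singleton:
  assumes "closed_graph X Y f" "x \<in> topspace X"
  shows "closedin Y {f x}"
proof -
  have "openin Y (topspace Y - {f x})"
  proof (subst openin_subopen, intro ballI)
    fix y assume "y \<in> topspace Y - {f x}"
    then obtain U V where UV: "openin X U" "openin Y V" "x \<in> U" "y \<in> V" "\<forall>x'\<in>U. f x' \<notin> V"
      using closed_graph_separation[OF assms] by blast
    then have "V \<subseteq> topspace Y - {f x}"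
      using openin_subset[OF UV(2)] by blast
    with UV show "\<exists>V. openin Y V \<and> y \<in> V \<and> V \<subseteq> topspace Y - {f x}"
      by blast
  qed
  moreover have "f x \<in> topspace Y"
    using closed_graph_funcset[OF assms(1)] assms(2) by blast
  ultimately show ?thesis
    by (simp add: closedin_def)
qed

lemma in_closure_of_singleton_imp_topspace:
  "x \<in> X closure_of {x'} \<Longrightarrow> x' \<in> topspace X"
  using closure_of_eq_empty_gen[of X "{x'}"] by (auto simp: disjnt_def)

lemma closed_graph_eq_on_closure:
  assumes "closed_graph X Y f" "x \<in> X closure_of {x'}"
  shows "f x = f x'"
proof (rule ccontr)
  assume ne: "f x \<noteq> f x'"
  have x: "x \<in> topspace X"
    using assms(2) by (simp add: in_closure_of)
  have "x' \<in> topspace X"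
    using assms(2) by (rule in_closure_of_singleton_imp_topspace)
  then have fx': "f x' \<in> topspace Y"
    using closed_graph_funcset[OF assms(1)] by blast
  obtain U V where "openin X U" "openin Y V" "x \<in> U" "f x' \<in> V" "\<forall>z\<in>U. f z \<notin> V"
    by (rule closed_graph_separation[OF assms(1) x fx' ne[symmetric]])
  moreover have "x' \<in> U"
    using assms(2) \<open>openin X U\<close> \<open>x \<in> U\<close> by (auto simp: in_closure_of)
  ultimately show False by blast
qed

lemma alexandroff_openin_Inter_nbhds:
  assumes "alexandroff_space X" "x \<in> topspace X"
  shows "openin X (\<Inter>{U. openin X U \<and> x \<in> U})"
  using assms unfolding alexandroff_space_def
  by (metis (mono_tags) empty_Collect_eq mem_Collect_eq openin_topspace)

lemma alexandroff_openin_if_closure_closed: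
  assumes "alexandroff_space X" "S \<subseteq> topspace X"
    and "\<And>x x'. x \<in> S \<Longrightarrow> x \<in> X closure_of {x'} \<Longrightarrow> x' \<in> S"
  shows "openin X S"
proof (subst openin_subopen, intro ballI)
  fix x assume "x \<in> S"
  define W where "W = \<Inter>{U. openin X U \<and> x \<in> U}"
  have x: "x \<in> topspace X" using \<open>x \<in> S\<close> assms(2) by blast
  have "W \<subseteq> S"
  proof
    fix x' assume "x' \<in> W"
    then have "x \<in> X closure_of {x'}"
      using x by (auto simp: W_def in_closure_of)
    with \<open>x \<in> S\<close> show "x' \<in> S" by (rule assms(3))
  qed
  moreover have "openin X W" "x \<in> W"
    using alexandroff_openin_Inter_nbhds[OF assms(1) x] by (auto simp: W_def)
  ultimately show "\<exists>W. openin X W \<and> x \<in> W \<and> W \<subseteq> S" by blast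
qed

lemma alexandroff_connected_imp_constant:
  assumes "alexandroff_space X" "connected_space X"
    and "\<And>x x'. x \<in> X closure_of {x'} \<Longrightarrow> f x = f x'"
    and "x0 \<in> topspace X" "x \<in> topspace X"
  shows "f x = f x0"
proof -
  define T where "T = {x \<in> topspace X. f x = f x0}"
  have "openin X T" "openin X (topspace X - T)"
    using assms(3) in_closure_of_singleton_imp_topspace[of _ X]
    by (intro alexandroff_openin_if_closure_closed[OF assms(1)]; force simp: T_def)+
  then have "closedin X T"
    by (simp add: closedin_def T_def)
  then have "T = topspace X"
    using assms(2,4) \<open>openin X T\<close> unfolding connected_space_clopen_in T_def by blast
  then show ?thesis using assms(5) by (auto simp: T_def)
qed

lemma closed_graph_iff_constant:
  assumes "alexandroff_space X" "connected_space X" "x0 \<in> topspace X"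
  shows "closed_graph X Y f \<longleftrightarrow> (\<exists>c. closedin Y {c} \<and> (\<forall>x\<in>topspace X. f x = c))"
proof
  assume cg: "closed_graph X Y f"
  have "\<forall>x\<in>topspace X. f x = f x0"
    by (intro ballI alexandroff_connected_imp_constant[OF assms(1,2) _ assms(3)])
      (erule closed_graph_eq_on_closure[OF cg])
  with closed_graph_imp_closedin_singleton[OF cg assms(3)]
  show "\<exists>c. closedin Y {c} \<and> (\<forall>x\<in>topspace X. f x = c)" by blast
next
  assume "\<exists>c. closedin Y {c} \<and> (\<forall>x\<in>topspace X. f x = c)"
  then obtain c where c: "closedin Y {c}" "\<forall>x\<in>topspace X. f x = c" by blast
  then have "{(x, f x) | x. x \<in> topspace X} = topspace X \<times> {c}" by auto
  with c(1) show "closed_graph X Y f"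
    by (simp add: closed_graph_def closedin_prod_Times_iff)
qed

lemma closed_graph_maps_eq_constants:
  assumes "alexandroff_space X" "connected_space X" "x0 \<in> topspace X"
  shows "{f \<in> topspace X \<rightarrow>\<^sub>E topspace Y. closed_graph X Y f}
           = (\<lambda>c. \<lambda>x\<in>topspace X. c) ` {c. closedin Y {c}}"
proof (intro equalityI subsetI)
  fix f assume "f \<in> {f \<in> topspace X \<rightarrow>\<^sub>E topspace Y. closed_graph X Y f}"
  then obtain c where "f \<in> extensional (topspace X)" "closedin Y {c}" "\<forall>x\<in>topspace X. f x = c"
    using closed_graph_iff_constant[OF assms, of Y f] by (auto simp: PiE_iff)
  then show "f \<in> (\<lambda>c. \<lambda>x\<in>topspace X. c) ` {c. closedin Y {c}}"
    by (auto simp: extensional_def fun_eq_iff intro!: image_eqI[where x = c])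
next
  fix f assume "f \<in> (\<lambda>c. \<lambda>x\<in>topspace X. c) ` {c. closedin Y {c}}"
  then obtain c where "closedin Y {c}" "f = (\<lambda>x\<in>topspace X. c)" by blast
  then show "f \<in> {f \<in> topspace X \<rightarrow>\<^sub>E topspace Y. closed_graph X Y f}"
    using closedin_subset closed_graph_iff_constant[OF assms] by fastforce
qed

lemma alexandroff_space_product_topology:
  assumes "finite I" "\<And>i. i \<in> I \<Longrightarrow> alexandroff_space (X i)"
  shows "alexandroff_space (product_topology X I)"
  unfolding alexandroff_space_def
proof (intro allI impI)
  fix F assume F: "F \<noteq> {} \<and> (\<forall>U\<in>F. openin (product_topology X I) U)"
  show "openin (product_topology X I) (\<Inter>F)"
  proof (subst openin_subopen, intro ballI)
    fix x assume x: "x \<in> \<Inter>F"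
    then have x_top: "x \<in> topspace (product_topology X I)"
      using F openin_subset by blast
    define M where "M i = \<Inter>{U. openin (X i) U \<and> x i \<in> U}" for i
    have M: "openin (X i) (M i)" "x i \<in> M i" if "i \<in> I" for i
      using alexandroff_openin_Inter_nbhds[OF assms(2)] x_top that by (auto simp: M_def)
    have "openin (product_topology X I) (PiE I M)"
      using M assms(1) by (simp add: openin_PiE_gen)
    moreover have "x \<in> PiE I M"
      using M x_top by (simp add: PiE_iff)
    moreover have "PiE I M \<subseteq> U" if "U \<in> F" for U
    proof -
      have "openin (product_topology X I) U" "x \<in> U"
        using F x that by auto
      then obtain V where V: "\<forall>i\<in>I. openin (X i) (V i)" "x \<in> PiE I V" "PiE I V \<subseteq> U"
        unfolding openin_product_topology_alt by blast
      then have "M i \<subseteq> V i" if "i \<in> I" for i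
        using that by (auto simp: M_def PiE_iff)
      then have "PiE I M \<subseteq> PiE I V" by (rule PiE_mono)
      with V(3) show ?thesis by blast
    qed
    ultimately show "\<exists>W. openin (product_topology X I) W \<and> x \<in> W \<and> W \<subseteq> \<Inter>F"
      by blast
  qed
qed

definition khalimsky_nbhd :: "int \<Rightarrow> int set" where
  "khalimsky_nbhd a = (if odd a then {a} else {a - 1, a, a + 1})"

lemma openin_khalimsky_line:
  "openin khalimsky_line U \<longleftrightarrow> (\<forall>x\<in>U. khalimsky_nbhd x \<subseteq> U)"
proof -
  let ?B = "(\<lambda>m. {2*m+1}) ` UNIV \<union> (\<lambda>m. {2*m-1, 2*m, 2*m+1::int}) ` UNIV"
  have basis: "khalimsky_nbhd x \<in> ?B" for x
  proof (cases "odd x")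
    case True
    then have "x = 2 * (x div 2) + 1" by presburger
    then show ?thesis using True
      by (auto simp: khalimsky_nbhd_def intro!: image_eqI[where x = "x div 2"])
  next
    case False
    then have "x = 2 * (x div 2)" by presburger
    then show ?thesis using False
      by (auto simp: khalimsky_nbhd_def intro!: image_eqI[where x = "x div 2"])
  qed
  show ?thesis
    unfolding khalimsky_line_def openin_topology_generated_by_iff
  proof
    assume "generate_topology_on ?B U"
    then show "\<forall>x\<in>U. khalimsky_nbhd x \<subseteq> U"
    proof (rule generate_topology_on_coarsest[rotated 2,
        where T = "\<lambda>U. \<forall>x\<in>U. khalimsky_nbhd x \<subseteq> U"])
      show "istopology (\<lambda>U. \<forall>x\<in>U. khalimsky_nbhd x \<subseteq> U)"
        unfolding istopology_def by blast
    qed (auto simp: khalimsky_nbhd_def)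
  next
    assume "\<forall>x\<in>U. khalimsky_nbhd x \<subseteq> U"
    then have "U = \<Union>(khalimsky_nbhd ` U)"
      by (auto simp: khalimsky_nbhd_def)
    also have "generate_topology_on ?B \<dots>"
      by (intro generate_topology_on.UN) (use basis generate_topology_on.Basis in blast)
    finally show "generate_topology_on ?B U" .
  qed
qed

lemma topspace_khalimsky_line [simp]: "topspace khalimsky_line = UNIV"
  using openin_khalimsky_line[of UNIV] openin_subset by blast

lemma alexandroff_space_khalimsky_line: "alexandroff_space khalimsky_line"
  unfolding alexandroff_space_def openin_khalimsky_line by blast

text \<open>A clopen set is closed under the step to both neighbours of every point: of an even
  point because its neighbourhood contains them, of an odd one because it lies in theirs.\<close>
lemma connected_space_khalimsky_line: "connected_space khalimsky_line"
  unfolding connected_space_clopen_in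
proof (intro allI impI)
  fix T assume "openin khalimsky_line T \<and> closedin khalimsky_line T"
  then have T: "\<forall>x\<in>T. khalimsky_nbhd x \<subseteq> T" and T': "\<forall>x\<in>-T. khalimsky_nbhd x \<subseteq> -T"
    by (auto simp: openin_khalimsky_line closedin_def Compl_eq_Diff_UNIV)
  have step: "x + 1 \<in> T \<and> x - 1 \<in> T" if "x \<in> T" for x
  proof (cases "odd x")
    case True
    then have "x \<in> khalimsky_nbhd (x + 1)" "x \<in> khalimsky_nbhd (x - 1)"
      by (auto simp: khalimsky_nbhd_def)
    then show ?thesis using T' that by blast
  next
    case False
    then have "x + 1 \<in> khalimsky_nbhd x" "x - 1 \<in> khalimsky_nbhd x"
      by (auto simp: khalimsky_nbhd_def)
    then show ?thesis using T that by blast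
  qed
  show "T = {} \<or> T = topspace khalimsky_line"
  proof (cases "T = {}")
    case False
    then obtain k where "k \<in> T" by blast
    have "i \<in> T" for i
      by (induct i rule: int_induct[where k = k]) (use \<open>k \<in> T\<close> step in auto)
    then show ?thesis by auto
  qed simp
qed

lemma closedin_khalimsky_line_singleton: "closedin khalimsky_line {a} \<longleftrightarrow> even a"
proof -
  have "closedin khalimsky_line {a} \<longleftrightarrow> (\<forall>x. x \<noteq> a \<longrightarrow> a \<notin> khalimsky_nbhd x)"
    by (auto simp: closedin_def openin_khalimsky_line)
  also have "\<dots> \<longleftrightarrow> even a"
  proof
    assume "\<forall>x. x \<noteq> a \<longrightarrow> a \<notin> khalimsky_nbhd x"
    then have "a \<notin> khalimsky_nbhd (a + 1)" by simp
    then show "even a" by (auto simp: khalimsky_nbhd_def split: if_splits)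
  qed (auto simp: khalimsky_nbhd_def)
  finally show ?thesis .
qed

lemma topspace_khalimsky_space: "topspace (khalimsky_space n) = {..<n} \<rightarrow>\<^sub>E UNIV"
  by (simp add: khalimsky_space_def)

lemma connected_space_khalimsky_space: "connected_space (khalimsky_space n)"
  unfolding khalimsky_space_def connected_space_product_topology
  using connected_space_khalimsky_line by blast

lemma alexandroff_space_khalimsky_space: "alexandroff_space (khalimsky_space n)"
  unfolding khalimsky_space_def
  by (simp add: alexandroff_space_product_topology alexandroff_space_khalimsky_line)

lemma closedin_khalimsky_space_singleton:
  "closedin (khalimsky_space n) {p} \<longleftrightarrow> p \<in> topspace (khalimsky_space n) \<and> (\<forall>i<n. even (p i))"
proof (cases "p \<in> topspace (khalimsky_space n)")
  case True
  then have "p \<in> extensional {..<n}"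
    by (simp add: topspace_khalimsky_space PiE_iff)
  with True show ?thesis
    by (auto simp: khalimsky_space_def closedin_product_topology_singleton
        closedin_khalimsky_line_singleton)
next
  case False
  then show ?thesis by (meson closedin_subset insert_subset)
qed

lemma khalimsky_closed_points:
  "{p. closedin (khalimsky_space n) {p}} = {(\<lambda>i\<in>{..<n}. 2 * l i) | l :: nat \<Rightarrow> int. True}"
proof (intro equalityI subsetI)
  fix p assume "p \<in> {p. closedin (khalimsky_space n) {p}}"
  then have p: "p \<in> {..<n} \<rightarrow>\<^sub>E UNIV" "\<forall>i<n. even (p i)"
    by (simp_all add: closedin_khalimsky_space_singleton topspace_khalimsky_space)
  define l where "l i = p i div 2" for i
  have "p = (\<lambda>i\<in>{..<n}. 2 * l i)"
    using p by (auto simp: l_def PiE_iff extensional_def fun_eq_iff)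
  then show "p \<in> {(\<lambda>i\<in>{..<n}. 2 * l i) | l :: nat \<Rightarrow> int. True}" by blast
next
  fix p assume "p \<in> {(\<lambda>i\<in>{..<n}. 2 * l i) | l :: nat \<Rightarrow> int. True}"
  then obtain l :: "nat \<Rightarrow> int" where "p = (\<lambda>i\<in>{..<n}. 2 * l i)" by blast
  then show "p \<in> {p. closedin (khalimsky_space n) {p}}"
    by (simp add: closedin_khalimsky_space_singleton topspace_khalimsky_space)
qed

lemma countable_khalimsky_closed_points: "countable {p. closedin (khalimsky_space n) {p}}"
proof (rule countable_subset)
  show "{p. closedin (khalimsky_space n) {p}} \<subseteq> {..<n} \<rightarrow>\<^sub>E UNIV"
    by (auto simp: closedin_khalimsky_space_singleton topspace_khalimsky_space)
qed (simp add: countable_PiE)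

lemma infinite_khalimsky_closed_points:
  assumes "n \<ge> 1"
  shows "infinite {p. closedin (khalimsky_space n) {p}}"
proof -
  have "inj (\<lambda>k::int. \<lambda>i\<in>{..<n}. 2 * k)"
  proof (rule injI)
    fix a b :: int assume "(\<lambda>i\<in>{..<n}. 2 * a) = (\<lambda>i\<in>{..<n}. 2 * b)"
    then have "(\<lambda>i\<in>{..<n}. 2 * a) 0 = (\<lambda>i\<in>{..<n}. 2 * b) 0" by simp
    then show "a = b" using assms by simp
  qed
  moreover have "range (\<lambda>k::int. \<lambda>i\<in>{..<n}. 2 * k) \<subseteq> {p. closedin (khalimsky_space n) {p}}"
    by (simp add: image_subset_iff closedin_khalimsky_space_singleton topspace_khalimsky_space)
  ultimately show ?thesis
    by (meson finite_imageD finite_subset infinite_UNIV_int)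
qed

theorem mainTheorem9:
  fixes n :: nat
  assumes "n \<ge> 1"
  shows "connected_space (khalimsky_space n)
    \<and> alexandroff_space (khalimsky_space n)
    \<and> {y \<in> topspace (khalimsky_space n). closedin (khalimsky_space n) {y}}
        = {(\<lambda>i\<in>{..<n}. 2 * l i) | l :: nat \<Rightarrow> int. True}
    \<and> (\<forall>f. f \<in> topspace (khalimsky_space n) \<rightarrow> topspace (khalimsky_space n) \<longrightarrow>
          (closed_graph (khalimsky_space n) (khalimsky_space n) f \<longleftrightarrow>
           (\<exists>l :: nat \<Rightarrow> int. \<forall>x\<in>topspace (khalimsky_space n).
               f x = (\<lambda>i\<in>{..<n}. 2 * l i))))
    \<and> countable {f \<in> topspace (khalimsky_space n) \<rightarrow>\<^sub>E topspace (khalimsky_space n).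
                  closed_graph (khalimsky_space n) (khalimsky_space n) f}
    \<and> infinite {f \<in> topspace (khalimsky_space n) \<rightarrow>\<^sub>E topspace (khalimsky_space n).
                  closed_graph (khalimsky_space n) (khalimsky_space n) f}
    \<and> continuous_map (khalimsky_space n) (khalimsky_space n) (\<lambda>x. \<lambda>i\<in>{..<n}. 1)
    \<and> \<not> closed_graph (khalimsky_space n) (khalimsky_space n) (\<lambda>x. \<lambda>i\<in>{..<n}. 1)"
proof -
  let ?K = "khalimsky_space n"
  let ?C = "{p. closedin ?K {p}}"
  have x0: "(\<lambda>i\<in>{..<n}. 0) \<in> topspace ?K"
    by (simp add: topspace_khalimsky_space)
  note setting = alexandroff_space_khalimsky_space connected_space_khalimsky_space x0
  have closed_points: "{y \<in> topspace ?K. closedin ?K {y}} = ?C"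
    using closedin_subset by auto
  have closed_iff: "closedin ?K {c} \<longleftrightarrow> (\<exists>l. c = (\<lambda>i\<in>{..<n}. 2 * l i))" for c
    using khalimsky_closed_points[of n] by (simp add: set_eq_iff)
  have closed_graph_iff:
    "closed_graph ?K ?K f \<longleftrightarrow> (\<exists>l. \<forall>x\<in>topspace ?K. f x = (\<lambda>i\<in>{..<n}. 2 * l i))" for f
    by (auto simp: closed_graph_iff_constant[OF setting] closed_iff)
  have "inj_on (\<lambda>c. \<lambda>x\<in>topspace ?K. c) ?C"
    using x0 by (intro inj_onI) (metis restrict_apply')
  then have "countable ((\<lambda>c. \<lambda>x\<in>topspace ?K. c) ` ?C)"
    and "infinite ((\<lambda>c. \<lambda>x\<in>topspace ?K. c) ` ?C)"
    using countable_khalimsky_closed_points infinite_khalimsky_closed_points[OF assms]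
    by (auto dest: finite_imageD)
  moreover have "\<not> closed_graph ?K ?K (\<lambda>x. \<lambda>i\<in>{..<n}. 1)"
    using closed_graph_imp_closedin_singleton[OF _ x0] assms
    by (fastforce simp: closedin_khalimsky_space_singleton)
  moreover have "continuous_map ?K ?K (\<lambda>x. \<lambda>i\<in>{..<n}. 1)"
    by (simp add: topspace_khalimsky_space)
  ultimately show ?thesis
    unfolding closed_points closed_graph_maps_eq_constants[OF setting]
    using setting(1,2) khalimsky_closed_points[of n] closed_graph_iff by blast
qed

end
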